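(* Let $k\geq 0$ and let $i,j$ be integers with $k+2\leq i,j\leq 2k+2$. Then $R_k^{\mathcal{CO}}(i,j)=i+j-k-2$, where $\mathcal{CO}$ is the class of cographs.
   Context: All graphs are finite and simple. For a graph $G$ and a nonnegative integer $k$, a $k$-sparse $j$-set is a set of $j$ vertices of $G$ inducing a subgraph of maximum degree at most $k$; a $k$-dense $i$-set is a set of $i$ vertices of $G$ that is $k$-sparse in the complement of $G$. For a graph class $\mathcal{G}$, $R_k^{\mathcal{G}}(i,j)$ is the smallest natural number $n$ such that every graph on $n$ vertices in $\mathcal{G}$ has either a $k$-dense $i$-set or a $k$-sparse $j$-set. A cograph is a graph containing no induced path on four vertices. *)

theory Defs
  imports Main
begin

definition simple_graph :: "nat \<Rightarrow> (nat \<Rightarrow> nat \<Rightarrow> bool) \<Rightarrow> bool" where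
  "simple_graph n E \<longleftrightarrow>
     (\<forall>u\<in>{..<n}. \<forall>v\<in>{..<n}. E u v \<longleftrightarrow> E v u) \<and> (\<forall>v\<in>{..<n}. \<not> E v v)"

definition cograph :: "nat \<Rightarrow> (nat \<Rightarrow> nat \<Rightarrow> bool) \<Rightarrow> bool" where
  "cograph n E \<longleftrightarrow> \<not> (\<exists>a\<in>{..<n}. \<exists>b\<in>{..<n}. \<exists>c\<in>{..<n}. \<exists>d\<in>{..<n}.
      distinct [a, b, c, d] \<and> E a b \<and> E b c \<and> E c d \<and>
      \<not> E a c \<and> \<not> E b d \<and> \<not> E a d)"

definition compl_graph :: "(nat \<Rightarrow> nat \<Rightarrow> bool) \<Rightarrow> nat \<Rightarrow> nat \<Rightarrow> bool" where
  "compl_graph E u v \<longleftrightarrow> u \<noteq> v \<and> \<not> E u v"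

definition sparse_set :: "nat \<Rightarrow> (nat \<Rightarrow> nat \<Rightarrow> bool) \<Rightarrow> nat \<Rightarrow> nat \<Rightarrow> nat set \<Rightarrow> bool" where
  "sparse_set n E k j S \<longleftrightarrow> S \<subseteq> {..<n} \<and> card S = j \<and>
     (\<forall>v\<in>S. card {u\<in>S. E v u} \<le> k)"

definition dense_set :: "nat \<Rightarrow> (nat \<Rightarrow> nat \<Rightarrow> bool) \<Rightarrow> nat \<Rightarrow> nat \<Rightarrow> nat set \<Rightarrow> bool" where
  "dense_set n E k i S \<longleftrightarrow> sparse_set n (compl_graph E) k i S"

definition R_cograph :: "nat \<Rightarrow> nat \<Rightarrow> nat \<Rightarrow> nat" where
  "R_cograph k i j = (LEAST n. \<forall>E. simple_graph n E \<and> cograph n E \<longrightarrow>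
      (\<exists>S. dense_set n E k i S) \<or> (\<exists>S. sparse_set n E k j S))"

end

theory Submission
  imports Defs
begin

(* A P4-free graph on at least two vertices is disconnected or has a disconnected complement:
   add the vertices one at a time. If the new vertex v is adjacent to all others, the complement is
   disconnected. Otherwise v has a non-neighbour in one part A of the old splitting; if v also has
   a neighbour z in the other part B, an edge from a neighbour y to a non-neighbour w of v inside A
   would give the induced P4 w-y-v-z, so the neighbours of v in A can join v and B.
   Complementation exchanges k-dense and k-sparse sets, so by induction on the number i + j - k - 2
   of vertices it suffices to treat a graph without edges between nonempty parts A and B.
   If |B| < j - k - 1, then B has at most k vertices, hence is k-sparse, and it extends a
   k-sparse (j - |B|)-set of A, which exists by induction unless A contains a k-dense i-set.
   Otherwise at most k + 1 vertices from each part form a k-sparse j-set.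
   For the lower bound, a clique on i - 1 vertices plus isolated vertices has neither set. *)

definition p4_free :: "'a set \<Rightarrow> ('a \<Rightarrow> 'a \<Rightarrow> bool) \<Rightarrow> bool" where
  "p4_free V E \<longleftrightarrow> \<not> (\<exists>a\<in>V. \<exists>b\<in>V. \<exists>c\<in>V. \<exists>d\<in>V.
      distinct [a, b, c, d] \<and> E a b \<and> E b c \<and> E c d \<and>
      \<not> E a c \<and> \<not> E b d \<and> \<not> E a d)"

definition disconnected :: "'a set \<Rightarrow> ('a \<Rightarrow> 'a \<Rightarrow> bool) \<Rightarrow> bool" where
  "disconnected V E \<longleftrightarrow> (\<exists>A B. A \<union> B = V \<and> A \<inter> B = {} \<and> A \<noteq> {} \<and> B \<noteq> {} \<and>
     (\<forall>x\<in>A. \<forall>y\<in>B. \<not> E x y))"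

lemma p4_freeD:
  "p4_free V E \<Longrightarrow> a \<in> V \<Longrightarrow> b \<in> V \<Longrightarrow> c \<in> V \<Longrightarrow> d \<in> V \<Longrightarrow> distinct [a, b, c, d] \<Longrightarrow>
   E a b \<Longrightarrow> E b c \<Longrightarrow> E c d \<Longrightarrow> \<not> E a c \<Longrightarrow> \<not> E b d \<Longrightarrow> \<not> E a d \<Longrightarrow> False"
  unfolding p4_free_def by blast

lemma p4_free_subset: "p4_free V E \<Longrightarrow> W \<subseteq> V \<Longrightarrow> p4_free W E"
  unfolding p4_free_def by blast

lemma p4_free_compl_graph:
  assumes sym: "symp_on V E" and p4: "p4_free V E"
  shows "p4_free V (compl_graph E)"
  unfolding p4_free_def
proof clarify
  fix a b c d
  assume V: "a \<in> V" "b \<in> V" "c \<in> V" "d \<in> V" and "distinct [a, b, c, d]"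
    and path: "compl_graph E a b" "compl_graph E b c" "compl_graph E c d"
      "\<not> compl_graph E a c" "\<not> compl_graph E b d" "\<not> compl_graph E a d"
  \<comment> \<open>the complement of the induced path a-b-c-d is the induced path b-d-a-c\<close>
  then have "distinct [b, d, a, c]" "E b d" "E d a" "E a c" "\<not> E b a" "\<not> E d c" "\<not> E b c"
    using symp_onD[OF sym] by (auto simp: compl_graph_def)
  then show False using p4_freeD[OF p4] V by blast
qed

lemma symp_on_compl_graph: "symp_on V E \<Longrightarrow> symp_on V (compl_graph E)"
  unfolding symp_on_def compl_graph_def by auto

lemma irreflp_on_compl_graph: "irreflp_on V (compl_graph E)"
  unfolding irreflp_on_def compl_graph_def by blast

lemma disconnectedI:
  "A \<union> B = V \<Longrightarrow> A \<inter> B = {} \<Longrightarrow> A \<noteq> {} \<Longrightarrow> B \<noteq> {} \<Longrightarrow>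
   (\<And>x y. x \<in> A \<Longrightarrow> y \<in> B \<Longrightarrow> \<not> E x y) \<Longrightarrow> disconnected V E"
  unfolding disconnected_def by blast

lemma disconnected_compl_compl:
  "disconnected V (compl_graph (compl_graph E)) \<longleftrightarrow> disconnected V E"
proof -
  have "compl_graph (compl_graph E) x y \<longleftrightarrow> E x y" if "x \<noteq> y" for x y
    using that unfolding compl_graph_def by blast
  then have "(\<forall>x\<in>A. \<forall>y\<in>B. \<not> compl_graph (compl_graph E) x y) \<longleftrightarrow> (\<forall>x\<in>A. \<forall>y\<in>B. \<not> E x y)"
    if "A \<inter> B = {}" for A B
    using that by (metis disjoint_iff)
  then show ?thesis unfolding disconnected_def by (intro ex_cong1 conj_cong) auto
qed

lemma disconnected_two_vertices:
  assumes "x \<noteq> y"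
  shows "disconnected {x, y} E \<or> disconnected {x, y} (compl_graph E)"
proof -
  have "{x} \<union> {y} = {x, y}" "{x} \<inter> {y} = {}" using assms by auto
  then show ?thesis
    using disconnectedI[of "{x}" "{y}" "{x, y}" E] disconnectedI[of "{x}" "{y}" "{x, y}" "compl_graph E"]
    by (auto simp: compl_graph_def)
qed

lemma disconnected_insert_nonneighbour:
  assumes sym: "symp_on V E" and p4: "p4_free V E" and v: "v \<in> V"
    and AB: "A \<union> B = V - {v}" "A \<inter> B = {}" "B \<noteq> {}"
    and cross: "\<forall>x\<in>A. \<forall>y\<in>B. \<not> E x y"
    and x: "x \<in> A" "\<not> E v x"
  shows "disconnected V E"
proof (cases "\<exists>z\<in>B. E v z")
  case False
  show ?thesis
    by (rule disconnectedI[of "A \<union> {v}" B]) (use AB cross False v in blast)+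
next
  case True
  then obtain z where z: "z \<in> B" "E v z" by blast
  define N where "N = {u\<in>A. E v u}"
  have A_sub: "A \<subseteq> V" and B_sub: "B \<subseteq> V" and vA: "v \<notin> A" and vB: "v \<notin> B"
    using AB by blast+
  have E_sym: "E p q \<Longrightarrow> E q p" if "p \<in> V" "q \<in> V" for p q
    using symp_onD[OF sym] that by blast
  have no_edge: "\<not> E y w" if y: "y \<in> N" and w: "w \<in> A - N" for y w
  proof
    assume "E y w"
    \<comment> \<open>then w-y-v-z would be an induced path\<close>
    have V: "w \<in> V" "y \<in> V" "z \<in> V" using y w z A_sub B_sub N_def by blast+
    have "distinct [w, y, v, z]" using y w z AB vA vB N_def by auto
    moreover have "E w y" using E_sym[OF V(2,1) \<open>E y w\<close>] .
    moreover have "E y v" using y N_def E_sym[OF v V(2)] by blast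
    moreover have "\<not> E w v" using w N_def E_sym[OF V(1) v] by blast
    moreover have "\<not> E y z" "\<not> E w z" using y w z cross N_def by blast+
    ultimately show False using p4_freeD[OF p4 V(1,2) v V(3)] z(2) by blast
  qed
  show ?thesis
  proof (rule disconnectedI[of "N \<union> B \<union> {v}" "A - N"])
    fix p q assume p: "p \<in> N \<union> B \<union> {v}" and q: "q \<in> A - N"
    consider "p \<in> N" | "p \<in> B" | "p = v" using p by blast
    then show "\<not> E p q"
    proof cases
      case 1
      then show ?thesis using no_edge q by blast
    next
      case 2
      then show ?thesis using E_sym[of p q] cross q B_sub A_sub by blast
    next
      case 3
      then show ?thesis using q N_def by blast
    qed
  qed (use AB x v vA vB N_def in blast)+
qed

lemma disconnected_insert:
  assumes sym: "symp_on V E" and p4: "p4_free V E" and v: "v \<in> V"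
    and W: "disconnected (V - {v}) E"
  shows "disconnected V E \<or> disconnected V (compl_graph E)"
proof -
  obtain A B where AB: "A \<union> B = V - {v}" "A \<inter> B = {}" "A \<noteq> {}" "B \<noteq> {}"
    and cross: "\<forall>x\<in>A. \<forall>y\<in>B. \<not> E x y"
    using W unfolding disconnected_def by blast
  have cross': "\<forall>x\<in>B. \<forall>y\<in>A. \<not> E x y"
    using cross symp_onD[OF sym] AB by blast
  show ?thesis
  proof (cases "\<forall>u\<in>V - {v}. E v u")
    case True
    then have "disconnected V (compl_graph E)"
      by (intro disconnectedI[of "{v}" "V - {v}"]) (use v AB in \<open>auto simp: compl_graph_def\<close>)
    then show ?thesis ..
  next
    case False
    then obtain x where x: "x \<in> V - {v}" "\<not> E v x" by blast
    have "B \<union> A = V - {v}" "B \<inter> A = {}" using AB by auto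
    then have "disconnected V E"
      using x AB disconnected_insert_nonneighbour[OF sym p4 v AB(1,2,4) cross, of x]
        disconnected_insert_nonneighbour[OF sym p4 v _ _ AB(3) cross', of x]
      by blast
    then show ?thesis ..
  qed
qed

lemma p4_free_disconnected_or_compl:
  assumes "finite V" "2 \<le> card V" "symp_on V E" "p4_free V E"
  shows "disconnected V E \<or> disconnected V (compl_graph E)"
  using assms
proof (induction V rule: finite_induct)
  case empty
  then show ?case by simp
next
  case (insert v W)
  have V_minus: "insert v W - {v} = W" using insert.hyps by auto
  show ?case
  proof (cases "2 \<le> card W")
    case True
    have "disconnected W E \<or> disconnected W (compl_graph E)"
      using insert.IH[OF True symp_on_subset[OF insert.prems(2)] p4_free_subset[OF insert.prems(3)]]
      by blast
    then show ?thesis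
    proof
      assume "disconnected W E"
      then show ?thesis
        using disconnected_insert[OF insert.prems(2,3), of v] V_minus by simp
    next
      assume "disconnected W (compl_graph E)"
      moreover have "symp_on (insert v W) (compl_graph E)"
        using symp_on_compl_graph insert.prems by blast
      moreover have "p4_free (insert v W) (compl_graph E)"
        using p4_free_compl_graph insert.prems by blast
      ultimately show ?thesis
        using disconnected_insert[of "insert v W" "compl_graph E" v] V_minus
          disconnected_compl_compl by auto
    qed
  next
    case False
    then have "card W = 1" using insert by simp
    then obtain w where "W = {w}" by (rule card_1_singletonE)
    moreover have "v \<noteq> w" using insert.hyps \<open>W = {w}\<close> by blast
    ultimately show ?thesis using disconnected_two_vertices[of v w E] by auto
  qed
qed

definition k_sparse :: "nat \<Rightarrow> ('a \<Rightarrow> 'a \<Rightarrow> bool) \<Rightarrow> 'a set \<Rightarrow> bool" where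
  "k_sparse k E S \<longleftrightarrow> (\<forall>v\<in>S. card {u\<in>S. E v u} \<le> k)"

definition dense_or_sparse :: "nat \<Rightarrow> nat \<Rightarrow> nat \<Rightarrow> nat set \<Rightarrow> (nat \<Rightarrow> nat \<Rightarrow> bool) \<Rightarrow> bool" where
  "dense_or_sparse k i j V E \<longleftrightarrow>
     (\<exists>S\<subseteq>V. card S = i \<and> k_sparse k (compl_graph E) S) \<or> (\<exists>S\<subseteq>V. card S = j \<and> k_sparse k E S)"

lemma k_sparse_if_card_le:
  assumes "finite S" "irreflp_on S E" "card S \<le> k + 1"
  shows "k_sparse k E S"
  unfolding k_sparse_def
proof
  fix v assume v: "v \<in> S"
  have "{u\<in>S. E v u} \<subseteq> S - {v}" using irreflp_onD[OF assms(2) v] by blast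
  then have "card {u\<in>S. E v u} \<le> card (S - {v})" using assms(1) by (intro card_mono) auto
  also have "\<dots> = card S - 1" using v by simp
  finally show "card {u\<in>S. E v u} \<le> k" using assms(3) by linarith
qed

lemma k_sparse_Un:
  assumes "k_sparse k E S" "k_sparse k E T" and no_edges: "\<forall>x\<in>S. \<forall>y\<in>T. \<not> E x y \<and> \<not> E y x"
  shows "k_sparse k E (S \<union> T)"
  unfolding k_sparse_def
proof
  fix v assume "v \<in> S \<union> T"
  then consider "v \<in> S" "{u\<in>S \<union> T. E v u} = {u\<in>S. E v u}"
    | "v \<in> T" "{u\<in>S \<union> T. E v u} = {u\<in>T. E v u}"
    using no_edges by blast
  then show "card {u\<in>S \<union> T. E v u} \<le> k"
    using assms(1,2) unfolding k_sparse_def by cases auto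
qed

lemma k_sparse_compl_compl:
  assumes "irreflp_on S E"
  shows "k_sparse k (compl_graph (compl_graph E)) S \<longleftrightarrow> k_sparse k E S"
proof -
  have "{u\<in>S. compl_graph (compl_graph E) v u} = {u\<in>S. E v u}" if "v \<in> S" for v
    using irreflp_onD[OF assms that] unfolding compl_graph_def by blast
  then show ?thesis unfolding k_sparse_def by simp
qed

lemma dense_or_sparse_compl_graph:
  assumes "irreflp_on V E"
  shows "dense_or_sparse k j i V (compl_graph E) \<longleftrightarrow> dense_or_sparse k i j V E"
proof -
  have "k_sparse k (compl_graph (compl_graph E)) S \<longleftrightarrow> k_sparse k E S" if "S \<subseteq> V" for S
    using k_sparse_compl_compl irreflp_on_subset[OF assms that] by blast
  then show ?thesis unfolding dense_or_sparse_def by (intro iffI; elim disjE exE conjE) blast+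
qed

lemma dense_or_sparse_extend_small_component:
  assumes B: "finite B" "irreflp_on B E" and A_B: "A \<inter> B = {}"
    and no_edges: "\<forall>x\<in>A. \<forall>y\<in>B. \<not> E x y \<and> \<not> E y x"
    and j: "card B + k + 2 \<le> j" "j \<le> 2 * k + 2"
    and A: "dense_or_sparse k i (j - card B) A E"
  shows "dense_or_sparse k i j (A \<union> B) E"
proof -
  from A consider (dense) S where "S \<subseteq> A" "card S = i" "k_sparse k (compl_graph E) S"
    | (sparse) S where "S \<subseteq> A" "card S = j - card B" "k_sparse k E S"
    unfolding dense_or_sparse_def by blast
  then show ?thesis
  proof cases
    case (dense S)
    then show ?thesis unfolding dense_or_sparse_def by blast
  next
    case (sparse S)
    have "card S > 0" using sparse(2) j(1) by linarith
    then have "finite S" by (rule card_ge_0_finite)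
    then have "card (S \<union> B) = j"
      using sparse(1,2) A_B B(1) j(1) card_Un_disjoint[of S B] by auto
    moreover have "k_sparse k E B" using k_sparse_if_card_le[OF B] j by simp
    then have "k_sparse k E (S \<union> B)"
      using k_sparse_Un[OF sparse(3)] no_edges sparse(1) by blast
    moreover have "S \<union> B \<subseteq> A \<union> B" using sparse(1) by blast
    ultimately show ?thesis unfolding dense_or_sparse_def by (intro disjI2 exI[of _ "S \<union> B"]) simp
  qed
qed

lemma sparse_set_in_large_components:
  assumes fin: "finite A" "finite B" and irr: "irreflp_on (A \<union> B) E" and A_B: "A \<inter> B = {}"
    and no_edges: "\<forall>x\<in>A. \<forall>y\<in>B. \<not> E x y \<and> \<not> E y x"
    and ij: "k + 2 \<le> i" "k + 2 \<le> j" "j \<le> 2 * k + 2" "card (A \<union> B) + k + 2 = i + j"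
    and large: "j \<le> card A + k + 1" "j \<le> card B + k + 1"
  shows "\<exists>S\<subseteq>A \<union> B. card S = j \<and> k_sparse k E S"
proof -
  define x where "x = min (card A) (k + 1)"
  define y where "y = j - x"
  have card_AB: "card (A \<union> B) = card A + card B" using card_Un_disjoint[OF fin A_B] .
  have "x \<le> card A" "y \<le> card B" "x \<le> k + 1" "y \<le> k + 1" "x + y = j"
    using ij large card_AB unfolding x_def y_def by auto
  moreover obtain A' where A': "A' \<subseteq> A" "card A' = x" "finite A'"
    using obtain_subset_with_card_n[OF \<open>x \<le> card A\<close>] by blast
  moreover obtain B' where B': "B' \<subseteq> B" "card B' = y" "finite B'"
    using obtain_subset_with_card_n[OF \<open>y \<le> card B\<close>] by blast
  ultimately have "card (A' \<union> B') = j" "card A' \<le> k + 1" "card B' \<le> k + 1"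
    using card_Un_disjoint[of A' B'] A_B by auto
  moreover have "irreflp_on A' E" "irreflp_on B' E"
    using irreflp_on_subset[OF irr] A'(1) B'(1) by blast+
  ultimately have "k_sparse k E A'" "k_sparse k E B'"
    using k_sparse_if_card_le A'(3) B'(3) by blast+
  moreover have "\<forall>x\<in>A'. \<forall>y\<in>B'. \<not> E x y \<and> \<not> E y x"
    using no_edges A'(1) B'(1) by blast
  ultimately have "k_sparse k E (A' \<union> B')" by (rule k_sparse_Un)
  moreover have "A' \<union> B' \<subseteq> A \<union> B" using A'(1) B'(1) by blast
  ultimately show ?thesis using \<open>card (A' \<union> B') = j\<close> by (intro exI[of _ "A' \<union> B'"]) simp
qed

lemma dense_or_sparse_if_disconnected:
  assumes fin: "finite V" and sym: "symp_on V E" and irr: "irreflp_on V E"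
    and disc: "disconnected V E"
    and ij: "k + 2 \<le> i" "k + 2 \<le> j" "j \<le> 2 * k + 2" "card V + k + 2 = i + j"
    and IH: "\<And>W j'. W \<subset> V \<Longrightarrow> k + 2 \<le> j' \<Longrightarrow> j' \<le> 2 * k + 2 \<Longrightarrow>
      card W + k + 2 = i + j' \<Longrightarrow> dense_or_sparse k i j' W E"
  shows "dense_or_sparse k i j V E"
proof -
  have small_component: "dense_or_sparse k i j V E"
    if XY: "X \<union> Y = V" "X \<inter> Y = {}" "Y \<noteq> {}"
      and no_edges: "\<forall>x\<in>X. \<forall>y\<in>Y. \<not> E x y \<and> \<not> E y x"
      and small: "card Y + k + 2 \<le> j" for X Y
  proof -
    have "finite X" "finite Y" using fin XY(1) by auto
    then have "card X + card Y = card V" using XY(1,2) card_Un_disjoint by metis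
    moreover have "X \<subset> V" using XY by blast
    ultimately have "dense_or_sparse k i (j - card Y) X E"
      using IH small ij by simp
    then show ?thesis
      using dense_or_sparse_extend_small_component[OF \<open>finite Y\<close> _ XY(2) no_edges small ij(3)]
        irreflp_on_subset[OF irr] XY(1) by blast
  qed
  obtain A B where AB: "A \<union> B = V" "A \<inter> B = {}" "A \<noteq> {}" "B \<noteq> {}"
    and cross: "\<forall>x\<in>A. \<forall>y\<in>B. \<not> E x y"
    using disc unfolding disconnected_def by blast
  have no_edges: "\<forall>x\<in>A. \<forall>y\<in>B. \<not> E x y \<and> \<not> E y x"
    using cross symp_onD[OF sym] AB(1) by blast
  then have no_edges': "\<forall>x\<in>B. \<forall>y\<in>A. \<not> E x y \<and> \<not> E y x" by blast
  consider "card B + k + 2 \<le> j" | "card A + k + 2 \<le> j"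
    | "j \<le> card A + k + 1" "j \<le> card B + k + 1" by linarith
  then show ?thesis
  proof cases
    case 1
    then show ?thesis using small_component[OF AB(1,2,4) no_edges] by blast
  next
    case 2
    have "B \<union> A = V" "B \<inter> A = {}" using AB by auto
    then show ?thesis using small_component[OF _ _ AB(3) no_edges' 2] by blast
  next
    case 3
    have "finite A" "finite B" using fin AB(1) by auto
    moreover have "irreflp_on (A \<union> B) E" "card (A \<union> B) + k + 2 = i + j"
      using irr ij(4) AB(1) by simp_all
    ultimately have "\<exists>S\<subseteq>V. card S = j \<and> k_sparse k E S"
      using sparse_set_in_large_components[OF _ _ _ AB(2) no_edges ij(1-3) _ 3] AB(1) by blast
    then show ?thesis unfolding dense_or_sparse_def by (rule disjI2)
  qed
qed

lemma cograph_dense_or_sparse: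
  assumes "finite V" "symp_on V E" "irreflp_on V E" "p4_free V E"
    and "k + 2 \<le> i" "i \<le> 2 * k + 2" "k + 2 \<le> j" "j \<le> 2 * k + 2"
    and "card V + k + 2 = i + j"
  shows "dense_or_sparse k i j V E"
  using assms
proof (induction "card V" arbitrary: V E i j rule: less_induct)
  case less
  have induced: "finite W" "symp_on W E" "irreflp_on W E" "p4_free W E" "card W < card V"
    if "W \<subset> V" for W
    using that less.prems finite_subset symp_on_subset irreflp_on_subset p4_free_subset
      psubset_card_mono by (metis psubset_imp_subset)+
  have "2 \<le> card V" using less.prems by linarith
  then consider "disconnected V E" | "disconnected V (compl_graph E)"
    using p4_free_disconnected_or_compl less.prems(1,2,4) by blast
  then show ?case
  proof cases
    case 1
    show ?thesis
    proof (rule dense_or_sparse_if_disconnected[OF less.prems(1-3) 1 less.prems(5,7-9)])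
      fix W j' assume "W \<subset> V" "k + 2 \<le> j'" "j' \<le> 2 * k + 2" "card W + k + 2 = i + j'"
      then show "dense_or_sparse k i j' W E"
        using less.hyps induced[OF \<open>W \<subset> V\<close>] less.prems(5,6) by blast
    qed
  next
    case 2
    have "dense_or_sparse k j i V (compl_graph E)"
    proof (rule dense_or_sparse_if_disconnected[OF less.prems(1)
          symp_on_compl_graph[OF less.prems(2)] irreflp_on_compl_graph 2 less.prems(7,5,6)])
      show "card V + k + 2 = j + i" using less.prems(9) by simp
      fix W i' assume "W \<subset> V" "k + 2 \<le> i'" "i' \<le> 2 * k + 2" "card W + k + 2 = j + i'"
      moreover have "symp_on W (compl_graph E)" "p4_free W (compl_graph E)"
        using induced[OF \<open>W \<subset> V\<close>] symp_on_compl_graph p4_free_compl_graph by blast+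
      ultimately show "dense_or_sparse k j i' W (compl_graph E)"
        using less.hyps induced[OF \<open>W \<subset> V\<close>] irreflp_on_compl_graph less.prems(7,8) by blast
    qed
    then show ?thesis using dense_or_sparse_compl_graph less.prems(3) by blast
  qed
qed

lemma cograph_ramsey_upper:
  assumes "simple_graph n E" "cograph n E"
    and "k + 2 \<le> i" "i \<le> 2 * k + 2" "k + 2 \<le> j" "j \<le> 2 * k + 2" "n + k + 2 = i + j"
  shows "(\<exists>S. dense_set n E k i S) \<or> (\<exists>S. sparse_set n E k j S)"
proof -
  have "symp_on {..<n} E" "irreflp_on {..<n} E"
    using assms(1) unfolding simple_graph_def symp_on_def irreflp_on_def by auto
  moreover have "p4_free {..<n} E" using assms(2) unfolding cograph_def p4_free_def .
  ultimately have "dense_or_sparse k i j {..<n} E"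
    using cograph_dense_or_sparse assms(3-7) by simp
  then show ?thesis
    unfolding dense_or_sparse_def dense_set_def sparse_set_def k_sparse_def by blast
qed

definition clique_graph :: "nat \<Rightarrow> nat \<Rightarrow> nat \<Rightarrow> bool" where
  "clique_graph c u v \<longleftrightarrow> u \<noteq> v \<and> u < c \<and> v < c"

lemma simple_graph_clique_graph: "simple_graph m (clique_graph c)"
  unfolding simple_graph_def clique_graph_def by auto

lemma cograph_clique_graph: "cograph m (clique_graph c)"
proof -
  have "clique_graph c a d" if "clique_graph c a b" "clique_graph c b d" "a \<noteq> d" for a b d
    using that unfolding clique_graph_def by simp
  then show ?thesis unfolding cograph_def by (metis distinct_length_2_or_more)
qed

lemma clique_graph_no_dense_set:
  assumes "k + 2 \<le> i" "c < i"
  shows "\<not> dense_set m (clique_graph c) k i S"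
proof
  assume "dense_set m (clique_graph c) k i S"
  then have S: "S \<subseteq> {..<m}" "card S = i" "\<forall>v\<in>S. card {u\<in>S. compl_graph (clique_graph c) v u} \<le> k"
    unfolding dense_set_def sparse_set_def by auto
  have "finite S" using S(1) finite_subset by blast
  show False
  proof (cases "S \<subseteq> {..<c}")
    case True
    then have "card S \<le> c" using card_mono[of "{..<c}" S] by simp
    then show False using S(2) assms(2) by linarith
  next
    case False
    \<comment> \<open>a vertex outside the clique is joined to all of S in the complement\<close>
    then obtain v where v: "v \<in> S" "c \<le> v" by (metis lessThan_iff not_le subsetI)
    then have "{u\<in>S. compl_graph (clique_graph c) v u} = S - {v}"
      unfolding compl_graph_def clique_graph_def by auto
    then have "card {u\<in>S. compl_graph (clique_graph c) v u} = i - 1"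
      using v(1) S(2) \<open>finite S\<close> by simp
    then show False using S(3) v(1) assms(1) by fastforce
  qed
qed

lemma clique_graph_no_sparse_set:
  assumes "k + 2 \<le> j" "m + k + 2 \<le> c + j"
  shows "\<not> sparse_set m (clique_graph c) k j S"
proof
  assume "sparse_set m (clique_graph c) k j S"
  then have S: "S \<subseteq> {..<m}" "card S = j" "\<forall>v\<in>S. card {u\<in>S. clique_graph c v u} \<le> k"
    unfolding sparse_set_def by auto
  define C where "C = S \<inter> {..<c}"
  define D where "D = S - {..<c}"
  have "finite C" "finite D" using S(1) finite_subset unfolding C_def D_def by auto
  have "D \<subseteq> {c..<m}" using S(1) unfolding D_def by auto
  then have "card D \<le> m - c" using card_mono[of "{c..<m}" D] by simp
  have "card C \<le> k + 1"
  proof (cases "C = {}")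
    case False
    then obtain v where v: "v \<in> C" by blast
    then have "{u\<in>S. clique_graph c v u} = C - {v}"
      unfolding C_def clique_graph_def by auto
    then have "card C - 1 \<le> k" using S(3) v \<open>finite C\<close> unfolding C_def by fastforce
    then show ?thesis by linarith
  qed simp
  moreover have "S = C \<union> D" "C \<inter> D = {}" unfolding C_def D_def by auto
  then have "card S = card C + card D"
    using card_Un_disjoint[OF \<open>finite C\<close> \<open>finite D\<close>] by simp
  ultimately show False using S(2) \<open>card D \<le> m - c\<close> assms by linarith
qed

theorem lemma7p2:
  fixes k i j :: nat
  assumes "k + 2 \<le> i" and "i \<le> 2 * k + 2"
      and "k + 2 \<le> j" and "j \<le> 2 * k + 2"
  shows "R_cograph k i j = i + j - k - 2"
  unfolding R_cograph_def
proof (rule Least_equality)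
  show "\<forall>E. simple_graph (i + j - k - 2) E \<and> cograph (i + j - k - 2) E \<longrightarrow>
    (\<exists>S. dense_set (i + j - k - 2) E k i S) \<or> (\<exists>S. sparse_set (i + j - k - 2) E k j S)"
    using cograph_ramsey_upper assms by simp
next
  fix m
  assume bound: "\<forall>E. simple_graph m E \<and> cograph m E \<longrightarrow>
    (\<exists>S. dense_set m E k i S) \<or> (\<exists>S. sparse_set m E k j S)"
  show "i + j - k - 2 \<le> m"
  proof (rule ccontr)
    assume "\<not> i + j - k - 2 \<le> m"
    then have "m + k + 2 \<le> (i - 1) + j" by linarith
    then show False
      using bound[rule_format, OF conjI[OF simple_graph_clique_graph cograph_clique_graph]]
        clique_graph_no_dense_set[of k i "i - 1"] clique_graph_no_sparse_set[of k j m "i - 1"] assms(1,3)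
      by auto
  qed
qed

end
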